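(* Let $G$ be a finite group with $|G|\ge3$ satisfying Property P. Then for every $S\in\mathcal B(G)$ with $\max\Delta(\mathsf L(S))\ge2$ there exists $T\in\mathcal B(G)$ with $|T|<|S|$ and $\max\Delta(\mathsf L(T))\ge\max\Delta(\mathsf L(S))-1$.
   Context: For a finite group $G$ (multiplicative, identity $1_G$), $\mathcal F(G)$ is the free abelian monoid with basis $G$ (sequences $S=g_1\boldsymbol{\cdot}\ldots\boldsymbol{\cdot}g_\ell$, operation $\boldsymbol{\cdot}$, length $|S|=\ell$). $\pi(S)=\{g_{\tau(1)}\cdots g_{\tau(\ell)}:\tau\text{ a permutation of }[1,\ell]\}$, $\mathcal B(G)=\{S\in\mathcal F(G):1_G\in\pi(S)\}$, $\mathcal A(G)$ its set of atoms. For $A\in\mathcal B(G)$, $\mathsf L(A)=\{k\in\mathbb N: A=U_1\boldsymbol{\cdot}\ldots\boldsymbol{\cdot}U_k \text{ with } U_i\in\mathcal A(G)\}$ (and $\mathsf L(1_{\mathcal F(G)})=\{0\}$). For a finite set $L=\{m_1<\dots<m_k\}\subset\mathbb Z$, $\Delta(L)=\{m_i-m_{i-1}:i\in[2,k]\}$. $G$ satisfies Property P if: whenever $U=g_1\boldsymbol{\cdot}\ldots\boldsymbol{\cdot}g_\ell\in\mathcal A(G)$ and $g_1=h_1h_2$ with $h_1,h_2\in G$, the sequence $h_1\boldsymbol{\cdot}h_2\boldsymbol{\cdot}g_2\boldsymbol{\cdot}\ldots\boldsymbol{\cdot}g_\ell$ is either an atom or a product of two atoms of $\mathcal B(G)$.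 *)

theory Defs
  imports "HOL-Algebra.Group" "HOL-Library.Multiset"
begin

definition list_prod :: "('a, 'b) monoid_scheme \<Rightarrow> 'a list \<Rightarrow> 'a" where
  "list_prod G xs = foldr (\<lambda>x y. x \<otimes>\<^bsub>G\<^esub> y) xs \<one>\<^bsub>G\<^esub>"

definition seq_prods :: "('a, 'b) monoid_scheme \<Rightarrow> 'a multiset \<Rightarrow> 'a set" where
  "seq_prods G S = {list_prod G xs | xs. mset xs = S}"

definition seqs :: "('a, 'b) monoid_scheme \<Rightarrow> 'a multiset set" where
  "seqs G = {S. set_mset S \<subseteq> carrier G}"

definition prod_one_seqs :: "('a, 'b) monoid_scheme \<Rightarrow> 'a multiset set" where
  "prod_one_seqs G = {S \<in> seqs G. \<one>\<^bsub>G\<^esub> \<in> seq_prods G S}"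

text \<open>Atoms of the monoid B(G) (whose only unit is the empty sequence).\<close>
definition is_atom :: "('a, 'b) monoid_scheme \<Rightarrow> 'a multiset \<Rightarrow> bool" where
  "is_atom G U \<longleftrightarrow> U \<in> prod_one_seqs G \<and> U \<noteq> {#} \<and>
     (\<forall>A B. A \<in> prod_one_seqs G \<longrightarrow> B \<in> prod_one_seqs G \<longrightarrow> U = A + B
        \<longrightarrow> A = {#} \<or> B = {#})"

definition lengths :: "('a, 'b) monoid_scheme \<Rightarrow> 'a multiset \<Rightarrow> nat set" where
  "lengths G A = {k. \<exists>Us. length Us = k \<and> (\<forall>U \<in> set Us. is_atom G U) \<and> sum_list Us = A}"

definition Delta :: "nat set \<Rightarrow> nat set" where
  "Delta L = {b - a | a b. a \<in> L \<and> b \<in> L \<and> a < b \<and> (\<forall>c \<in> L. \<not> (a < c \<and> c < b))}"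

definition property_P :: "('a, 'b) monoid_scheme \<Rightarrow> bool" where
  "property_P G \<longleftrightarrow> (\<forall>U g h1 h2. is_atom G U \<longrightarrow> g \<in># U \<longrightarrow>
      h1 \<in> carrier G \<longrightarrow> h2 \<in> carrier G \<longrightarrow> g = h1 \<otimes>\<^bsub>G\<^esub> h2 \<longrightarrow>
      (let V = U - {#g#} + {#h1, h2#} in
         is_atom G V \<or> (\<exists>U1 U2. is_atom G U1 \<and> is_atom G U2 \<and> V = U1 + U2)))"

end

theory Submission
  imports Defs
begin

text \<open>
  Let a < b be consecutive lengths of S with b - a \<ge> 2, realised by factorizations V_1 ... V_a and
  U_1 ... U_b. If 1 occurs in S, removing it shifts every length down by one. Otherwise some V_i
  has a product-one ordering with two adjacent terms h_1, h_2 lying in two different atoms U_j, U_k: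
  if there were none, every V_i would be contained in a single U_j that owns all of its terms, and
  this would force b \<le> a. Replacing h_1, h_2 by h_1 h_2 gives a shorter T. Merging h_1, h_2 inside
  V_i shows a \<in> L(T); merging U_j and U_k shows that L(T) contains a length \<ge> b - 1; and by
  Property P every m \<in> L(T) has m or m + 1 in L(S), so L(T) has no element strictly between a and
  b - 1.
\<close>

definition separated :: "'c multiset multiset \<Rightarrow> 'c \<Rightarrow> 'c \<Rightarrow> bool" where
  "separated M x y \<longleftrightarrow> (\<exists>U1 U2 R. M = {#U1, U2#} + R \<and> x \<in># U1 \<and> y \<in># U2)"

definition owned_by :: "'c multiset multiset \<Rightarrow> 'c multiset \<Rightarrow> 'c \<Rightarrow> bool" where
  "owned_by M U x \<longleftrightarrow> x \<in># U \<and> (\<forall>U' \<in># M - {#U#}. x \<notin># U')"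

lemma separatedI:
  assumes "U \<in># M" "U' \<in># M - {#U#}" "x \<in># U" "y \<in># U'"
  shows "separated M x y"
proof -
  have "M = {#U, U'#} + (M - {#U#} - {#U'#})"
    using assms(1,2) by (metis add_mset_add_single insert_DiffM union_commute union_mset_add_mset_left)
  then show ?thesis unfolding separated_def using assms(3,4) by blast
qed

lemma separated_commute: "separated M x y \<Longrightarrow> separated M y x"
  unfolding separated_def by (metis add_mset_commute)

lemma not_separated_owned_by:
  assumes not_sep: "\<not> separated M x y" and U: "U \<in># M" "x \<in># U" and y: "y \<in># \<Sum>\<^sub># M"
  shows "owned_by M U x" and "owned_by M U y"
proof -
  from y obtain U' where U': "U' \<in># M" "y \<in># U'" by auto
  have y_in_U: "y \<in># U"
  proof (rule ccontr)
    assume "y \<notin># U"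
    with U' have "U' \<in># M - {#U#}" by (auto simp: in_diff_count)
    then show False using separatedI[OF U(1) _ U(2) U'(2)] not_sep by blast
  qed
  have "x \<notin># U'" if other: "U' \<in># M - {#U#}" for U'
    using separated_commute[OF separatedI[OF U(1) other y_in_U]] not_sep by blast
  moreover have "y \<notin># U'" if other: "U' \<in># M - {#U#}" for U'
    using separatedI[OF U(1) other U(2)] not_sep by blast
  ultimately show "owned_by M U x" "owned_by M U y" unfolding owned_by_def using U(2) y_in_U by auto
qed

lemma owned_by_unique: "owned_by M U x \<Longrightarrow> U' \<in># M \<Longrightarrow> x \<in># U' \<Longrightarrow> U' = U"
  unfolding owned_by_def by (cases "U' = U") (auto simp: in_diff_count)

lemma owned_by_count:
  assumes "owned_by M U x" "U \<in># M"
  shows "count M U = 1"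
proof -
  have "\<not> 1 < count M U" using assms(1) by (auto simp: owned_by_def in_diff_count)
  then show ?thesis using assms(2) by (simp add: Suc_le_eq le_antisym)
qed

lemma owner_exists:
  assumes "2 \<le> length xs"
    and "\<forall>as x y bs. xs = as @ x # y # bs \<longrightarrow> \<not> separated M x y"
    and "set xs \<subseteq> set_mset (\<Sum>\<^sub># M)"
  shows "\<exists>U \<in># M. \<forall>x \<in> set xs. owned_by M U x"
  using assms
proof (induction xs)
  case Nil
  then show ?case by simp
next
  case (Cons x xs)
  then obtain y ys where xs: "xs = y # ys" by (cases xs) auto
  have not_sep: "\<not> separated M x y" using Cons.prems(2) xs by (metis append_Nil)
  obtain U where U: "U \<in># M" "x \<in># U" using Cons.prems(3) by auto
  have "y \<in># \<Sum>\<^sub># M" using Cons.prems(3) xs by auto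
  then have owned: "owned_by M U x" "owned_by M U y" using not_separated_owned_by[OF not_sep U] by auto
  show ?case
  proof (cases "ys = []")
    case True
    then show ?thesis using owned U xs by auto
  next
    case False
    then have "2 \<le> length xs" using xs by (cases ys) auto
    moreover have "\<forall>as x y bs. xs = as @ x # y # bs \<longrightarrow> \<not> separated M x y"
      using Cons.prems(2) by (metis append_Cons)
    moreover have "set xs \<subseteq> set_mset (\<Sum>\<^sub># M)" using Cons.prems(3) by simp
    ultimately obtain U' where U': "U' \<in># M" "\<forall>x \<in> set xs. owned_by M U' x"
      using Cons.IH by blast
    have "owned_by M U' y" using U'(2) xs by simp
    moreover have "y \<in># U" using owned(2) by (simp add: owned_by_def)
    ultimately have "U = U'" by (rule owned_by_unique[OF _ U(1)])
    then show ?thesis using U' owned U by auto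
  qed
qed

text \<open>Sending each V to its owner covers every U exactly once, so there are at least as many V.\<close>
lemma length_le_if_owners:
  assumes sums: "sum_list Vs = sum_list Us" and nonempty: "\<forall>U \<in> set Us. U \<noteq> {#}"
    and owners: "\<forall>V \<in> set Vs. \<exists>U \<in># mset Us. \<forall>x \<in># V. owned_by (mset Us) U x"
  shows "length Us \<le> length Vs"
proof -
  define M where "M = mset Us"
  define owner where "owner V = (SOME U. U \<in># M \<and> (\<forall>x \<in># V. owned_by M U x))" for V
  have owner: "owner V \<in># M" "\<forall>x \<in># V. owned_by M (owner V) x" if "V \<in> set Vs" for V
  proof -
    have "\<exists>U. U \<in># M \<and> (\<forall>x \<in># V. owned_by M U x)" using owners that M_def by blast
    from someI_ex[OF this] show "owner V \<in># M" "\<forall>x \<in># V. owned_by M (owner V) x"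
      unfolding owner_def by blast+
  qed
  have covered: "U \<in> owner ` set Vs \<and> count M U = 1" if U: "U \<in> set Us" for U
  proof -
    obtain x where x: "x \<in># U" using nonempty U by blast
    then have "x \<in># sum_list Vs" using sums U by auto
    then obtain V where V: "V \<in> set Vs" "x \<in># V" by auto
    have owned: "owned_by M (owner V) x" using owner(2)[OF V(1)] V(2) by blast
    have "U = owner V" using owned_by_unique[OF owned _ x] U M_def by simp
    moreover have "count M U = 1" using owned_by_count[OF owned owner(1)[OF V(1)]] calculation by simp
    ultimately show ?thesis using V(1) by blast
  qed
  have "distinct Us"
    unfolding distinct_count_atmost_1
  proof
    fix U
    show "count (mset Us) U = (if U \<in> set Us then 1 else 0)"
      using covered[of U] unfolding M_def by (cases "U \<in> set Us") simp_all
  qed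
  then have "length Us = card (set Us)" by (simp add: distinct_card)
  also have "\<dots> \<le> card (owner ` set Vs)" using covered by (intro card_mono) auto
  also have "\<dots> \<le> card (set Vs)" by (rule card_image_le) simp
  also have "\<dots> \<le> length Vs" by (rule card_length)
  finally show ?thesis .
qed

lemma separated_adjacent_pair_exists:
  assumes "sum_list Vs = sum_list Us" "\<forall>U \<in> set Us. U \<noteq> {#}" "length Vs < length Us"
    and orderings: "\<forall>V \<in> set Vs. \<exists>xs. mset xs = V \<and> 2 \<le> length xs \<and> P xs"
  shows "\<exists>xs as x y bs. mset xs \<in> set Vs \<and> P xs \<and> xs = as @ x # y # bs \<and>
           separated (mset Us) x y"
proof (rule ccontr)
  assume none: "\<not> ?thesis"
  have "\<exists>U \<in># mset Us. \<forall>x \<in># V. owned_by (mset Us) U x" if V: "V \<in> set Vs" for V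
  proof -
    obtain xs where xs: "mset xs = V" "2 \<le> length xs" "P xs" using orderings V by blast
    have "\<exists>U \<in># mset Us. \<forall>x \<in> set xs. owned_by (mset Us) U x"
    proof (rule owner_exists[OF xs(2)])
      show "\<forall>as x y bs. xs = as @ x # y # bs \<longrightarrow> \<not> separated (mset Us) x y"
      proof (intro allI impI notI)
        fix as x y bs
        assume "xs = as @ x # y # bs" "separated (mset Us) x y"
        with xs V show False using none by blast
      qed
      show "set xs \<subseteq> set_mset (\<Sum>\<^sub># (mset Us))"
        using xs(1) V by (auto simp: sum_mset_sum_list simp flip: assms(1))
    qed
    then show ?thesis unfolding xs(1)[symmetric] by simp
  qed
  then have "length Us \<le> length Vs" using length_le_if_owners assms(1,2) by blast
  then show False using assms(3) by simp
qed

lemma finite_Delta: "finite L \<Longrightarrow> finite (Delta L)"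
proof -
  assume "finite L"
  moreover have "Delta L \<subseteq> (\<lambda>(a, b). b - a) ` (L \<times> L)" unfolding Delta_def by force
  ultimately show ?thesis using finite_subset by blast
qed

lemma Delta_gap:
  assumes fin: "finite L" and "x \<in> L" "x \<le> p" and "y \<in> L" "q \<le> y" and "p < q"
    and no_between: "\<forall>z \<in> L. z \<le> p \<or> q \<le> z"
  shows "Delta L \<noteq> {}" and "q - p \<le> Max (Delta L)"
proof -
  define a where "a = Max {z \<in> L. z \<le> p}"
  define b where "b = Min {z \<in> L. q \<le> z}"
  have below: "finite {z \<in> L. z \<le> p}" "{z \<in> L. z \<le> p} \<noteq> {}" using fin assms(2,3) by auto
  have above: "finite {z \<in> L. q \<le> z}" "{z \<in> L. q \<le> z} \<noteq> {}" using fin assms(4,5) by auto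
  have a: "a \<in> L" "a \<le> p" "\<And>z. z \<in> L \<Longrightarrow> z \<le> p \<Longrightarrow> z \<le> a"
    using Max_in[OF below] Max_ge[OF below(1)] unfolding a_def by auto
  have b: "b \<in> L" "q \<le> b" "\<And>z. z \<in> L \<Longrightarrow> q \<le> z \<Longrightarrow> b \<le> z"
    using Min_in[OF above] Min_le[OF above(1)] unfolding b_def by auto
  have "\<forall>z \<in> L. \<not> (a < z \<and> z < b)" using no_between a(3) b(3) by (meson leD)
  moreover have "a < b" using a(2) b(2) \<open>p < q\<close> by simp
  ultimately have in_Delta: "b - a \<in> Delta L" unfolding Delta_def using a(1) b(1) by blast
  then show "Delta L \<noteq> {}" by blast
  have "q - p \<le> b - a" using a b by simp
  also have "\<dots> \<le> Max (Delta L)" using in_Delta finite_Delta[OF fin] by simp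
  finally show "q - p \<le> Max (Delta L)" .
qed

lemma lengthsI: "\<forall>U \<in> set Us. is_atom G U \<Longrightarrow> sum_list Us = A \<Longrightarrow> length Us \<in> lengths G A"
  unfolding lengths_def by blast

context group
begin

lemma list_prod_Nil [simp]: "list_prod G [] = \<one>"
  by (simp add: list_prod_def)

lemma list_prod_Cons [simp]: "list_prod G (x # xs) = x \<otimes> list_prod G xs"
  by (simp add: list_prod_def)

lemma list_prod_closed [simp]: "set xs \<subseteq> carrier G \<Longrightarrow> list_prod G xs \<in> carrier G"
  by (induct xs) auto

lemma list_prod_append:
  "set xs \<subseteq> carrier G \<Longrightarrow> set ys \<subseteq> carrier G \<Longrightarrow>
    list_prod G (xs @ ys) = list_prod G xs \<otimes> list_prod G ys"
  by (induct xs) (auto simp: m_assoc)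

lemma prod_one_seqs_iff:
  "S \<in> prod_one_seqs G \<longleftrightarrow> (\<exists>xs. mset xs = S \<and> set xs \<subseteq> carrier G \<and> list_prod G xs = \<one>)"
  unfolding prod_one_seqs_def seqs_def seq_prods_def by force

lemma empty_in_prod_one_seqs: "{#} \<in> prod_one_seqs G"
  unfolding prod_one_seqs_iff by (intro exI[of _ "[]"]) auto

lemma prod_one_seqs_add:
  assumes "A \<in> prod_one_seqs G" "B \<in> prod_one_seqs G"
  shows "A + B \<in> prod_one_seqs G"
proof -
  obtain xs ys where "mset xs = A" "set xs \<subseteq> carrier G" "list_prod G xs = \<one>"
    "mset ys = B" "set ys \<subseteq> carrier G" "list_prod G ys = \<one>"
    using assms unfolding prod_one_seqs_iff by blast
  then show ?thesis
    unfolding prod_one_seqs_iff by (intro exI[of _ "xs @ ys"]) (auto simp: list_prod_append)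
qed

lemma prod_one_seqs_if_in_lengths: "m \<in> lengths G S \<Longrightarrow> S \<in> prod_one_seqs G"
proof -
  have "\<forall>U \<in> set Us. is_atom G U \<Longrightarrow> sum_list Us \<in> prod_one_seqs G" for Us
    by (induct Us) (auto simp: is_atom_def intro: prod_one_seqs_add empty_in_prod_one_seqs)
  then show "m \<in> lengths G S \<Longrightarrow> S \<in> prod_one_seqs G" unfolding lengths_def by blast
qed

lemma factorization_exists:
  "S \<in> prod_one_seqs G \<Longrightarrow> \<exists>Us. (\<forall>U \<in> set Us. is_atom G U) \<and> sum_list Us = S"
proof (induction "size S" arbitrary: S rule: less_induct)
  case less
  show ?case
  proof (cases "S = {#} \<or> is_atom G S")
    case True
    then show ?thesis
    proof
      assume "S = {#}"
      then show ?thesis by (intro exI[of _ "[]"]) auto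
    next
      assume "is_atom G S"
      then show ?thesis by (intro exI[of _ "[S]"]) auto
    qed
  next
    case False
    then obtain A B where AB: "A \<in> prod_one_seqs G" "B \<in> prod_one_seqs G" "S = A + B"
        "A \<noteq> {#}" "B \<noteq> {#}"
      using less.prems unfolding is_atom_def by blast
    then have "size A < size S" "size B < size S" by (auto simp: nonempty_has_size)
    then obtain As Bs where "\<forall>U \<in> set As. is_atom G U" "sum_list As = A"
        "\<forall>U \<in> set Bs. is_atom G U" "sum_list Bs = B"
      using less.hyps AB by meson
    then show ?thesis using AB by (intro exI[of _ "As @ Bs"]) auto
  qed
qed

lemma finite_lengths: "finite (lengths G S)"
proof -
  have "length Us \<le> size (sum_list Us)" if "\<forall>U \<in> set Us. is_atom G U" for Us
    using that by (induct Us) (auto simp: is_atom_def Suc_le_eq nonempty_has_size)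
  then have "lengths G S \<subseteq> {..size S}" unfolding lengths_def by auto
  then show ?thesis using finite_subset by blast
qed

lemma is_atom_one: "is_atom G {#\<one>#}"
proof -
  have "{#\<one>#} \<in> prod_one_seqs G" unfolding prod_one_seqs_iff by (intro exI[of _ "[\<one>]"]) auto
  moreover have "A = {#} \<or> B = {#}" if "{#\<one>#} = A + B" for A B :: "'a multiset"
    using that by (metis union_is_single)
  ultimately show ?thesis unfolding is_atom_def by auto
qed

lemma prod_one_seqs_add_msetE:
  assumes "add_mset h A \<in> prod_one_seqs G"
  obtains ys where "mset ys = A" "set ys \<subseteq> carrier G" "h \<in> carrier G"
    "h \<otimes> list_prod G ys = \<one>" "list_prod G ys \<otimes> h = \<one>"
proof -
  obtain xs where xs: "mset xs = add_mset h A" "set xs \<subseteq> carrier G" "list_prod G xs = \<one>"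
    using assms unfolding prod_one_seqs_iff by blast
  have "h \<in> set xs" using arg_cong[OF xs(1), of set_mset] by simp
  then obtain as bs where xs_eq: "xs = as @ h # bs" by (meson split_list)
  have carrier: "set as \<subseteq> carrier G" "set bs \<subseteq> carrier G" "h \<in> carrier G" using xs(2) xs_eq by auto
  define pa where "pa = list_prod G as"
  define pb where "pb = list_prod G bs"
  have closed: "pa \<in> carrier G" "pb \<in> carrier G" using carrier unfolding pa_def pb_def by simp_all
  have prod: "pa \<otimes> (h \<otimes> pb) = \<one>"
    using xs(3) carrier unfolding xs_eq pa_def pb_def by (simp add: list_prod_append)
  then have "(h \<otimes> pb) \<otimes> pa = \<one>" by (rule inv_comm) (use closed carrier in auto)
  moreover have "pb \<otimes> (pa \<otimes> h) = \<one>"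
  proof (rule inv_comm)
    show "(pa \<otimes> h) \<otimes> pb = \<one>" using prod closed carrier by (simp add: m_assoc)
  qed (use closed carrier in auto)
  moreover have "mset (bs @ as) = A" "list_prod G (bs @ as) = pb \<otimes> pa"
    using xs(1) carrier unfolding xs_eq pa_def pb_def by (auto simp: list_prod_append)
  ultimately show ?thesis using that[of "bs @ as"] carrier closed by (simp add: m_assoc)
qed

lemma atom_with_one:
  assumes atom: "is_atom G U" and "\<one> \<in># U"
  shows "U = {#\<one>#}"
proof -
  obtain A where U: "U = add_mset \<one> A" using assms(2) by (metis multi_member_split)
  then obtain ys where "mset ys = A" "set ys \<subseteq> carrier G" "\<one> \<otimes> list_prod G ys = \<one>"
    using atom unfolding is_atom_def by (auto elim: prod_one_seqs_add_msetE)
  then have "A \<in> prod_one_seqs G" unfolding prod_one_seqs_iff by auto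
  moreover have "{#\<one>#} \<in> prod_one_seqs G" using is_atom_one by (simp add: is_atom_def)
  moreover have "U = {#\<one>#} + A" using U by simp
  ultimately show ?thesis using atom unfolding is_atom_def by fastforce
qed

lemma atom_without_one_ordering:
  assumes atom: "is_atom G U" and "\<one> \<notin># U"
  obtains xs where "mset xs = U" "2 \<le> length xs" "set xs \<subseteq> carrier G" "list_prod G xs = \<one>"
proof -
  obtain xs where xs: "mset xs = U" "set xs \<subseteq> carrier G" "list_prod G xs = \<one>"
    using atom unfolding is_atom_def prod_one_seqs_iff by blast
  have "2 \<le> length xs"
  proof (rule ccontr)
    assume "\<not> 2 \<le> length xs"
    moreover have "xs \<noteq> []" using atom xs(1) by (auto simp: is_atom_def)
    ultimately obtain x where "xs = [x]" by (cases xs) (auto simp: Suc_le_eq)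
    then show False using xs assms(2) by auto
  qed
  then show ?thesis using that xs by blast
qed

lemma lengths_add_mset_one: "lengths G (add_mset \<one> T) = Suc ` lengths G T"
proof
  show "Suc ` lengths G T \<subseteq> lengths G (add_mset \<one> T)"
  proof
    fix k assume "k \<in> Suc ` lengths G T"
    then obtain Us where "Suc (length Us) = k" "\<forall>U \<in> set Us. is_atom G U" "sum_list Us = T"
      unfolding lengths_def by blast
    then show "k \<in> lengths G (add_mset \<one> T)"
      using lengthsI[of "{#\<one>#} # Us"] is_atom_one by auto
  qed
  show "lengths G (add_mset \<one> T) \<subseteq> Suc ` lengths G T"
  proof
    fix k assume "k \<in> lengths G (add_mset \<one> T)"
    then obtain Us where Us: "length Us = k" "\<forall>U \<in> set Us. is_atom G U" "sum_list Us = add_mset \<one> T"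
      unfolding lengths_def by blast
    have "\<one> \<in># sum_list Us" unfolding Us(3) by simp
    then obtain U where "U \<in> set Us" "\<one> \<in># U" by auto
    then have "{#\<one>#} \<in> set Us" using atom_with_one Us(2) by auto
    then obtain Us1 Us2 where split: "Us = Us1 @ {#\<one>#} # Us2" by (meson split_list)
    then have "length (Us1 @ Us2) \<in> lengths G T" using Us(2,3) by (intro lengthsI) auto
    moreover have "k = Suc (length (Us1 @ Us2))" using Us(1) split by simp
    ultimately show "k \<in> Suc ` lengths G T" by blast
  qed
qed

lemma prod_one_seqs_split:
  assumes "add_mset (h1 \<otimes> h2) A \<in> prod_one_seqs G" "h1 \<in> carrier G" "h2 \<in> carrier G"
  shows "A + {#h1, h2#} \<in> prod_one_seqs G"
proof -
  obtain ys where ys: "mset ys = A" "set ys \<subseteq> carrier G" "(h1 \<otimes> h2) \<otimes> list_prod G ys = \<one>"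
    using assms(1) by (rule prod_one_seqs_add_msetE)
  then have "list_prod G (h1 # h2 # ys) = \<one>" using assms(2,3) by (simp add: m_assoc)
  then show ?thesis unfolding prod_one_seqs_iff using ys assms(2,3)
    by (intro exI[of _ "h1 # h2 # ys"]) auto
qed

lemma prod_one_seqs_merge:
  assumes "add_mset h1 A \<in> prod_one_seqs G" "add_mset h2 B \<in> prod_one_seqs G"
  shows "add_mset (h1 \<otimes> h2) (A + B) \<in> prod_one_seqs G"
proof -
  obtain ys where ys: "mset ys = A" "set ys \<subseteq> carrier G" "h1 \<in> carrier G"
      "list_prod G ys \<otimes> h1 = \<one>"
    using assms(1) by (rule prod_one_seqs_add_msetE)
  obtain zs where zs: "mset zs = B" "set zs \<subseteq> carrier G" "h2 \<in> carrier G"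
      "h2 \<otimes> list_prod G zs = \<one>"
    using assms(2) by (rule prod_one_seqs_add_msetE)
  have "list_prod G (ys @ (h1 \<otimes> h2) # zs) = (list_prod G ys \<otimes> h1) \<otimes> (h2 \<otimes> list_prod G zs)"
    using ys zs by (simp add: list_prod_append m_assoc)
  then show ?thesis unfolding prod_one_seqs_iff using ys zs
    by (intro exI[of _ "ys @ (h1 \<otimes> h2) # zs"]) auto
qed

lemma is_atom_merge_adjacent:
  assumes atom: "is_atom G (mset (as @ h1 # h2 # bs))"
    and carrier: "set (as @ h1 # h2 # bs) \<subseteq> carrier G"
    and prod: "list_prod G (as @ h1 # h2 # bs) = \<one>"
  shows "is_atom G (mset (as @ (h1 \<otimes> h2) # bs))"
proof -
  define g where "g = h1 \<otimes> h2"
  have h: "h1 \<in> carrier G" "h2 \<in> carrier G" using carrier by auto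
  have "list_prod G (as @ g # bs) = list_prod G (as @ h1 # h2 # bs)"
    using carrier unfolding g_def by (simp add: list_prod_append m_assoc)
  then have merged: "mset (as @ g # bs) \<in> prod_one_seqs G"
    unfolding prod_one_seqs_iff using prod carrier h g_def by (intro exI[of _ "as @ g # bs"]) auto
  have left_empty: "A = {#}"
    if AB: "A \<in> prod_one_seqs G" "B \<in> prod_one_seqs G" "mset (as @ g # bs) = A + B" "g \<in># B"
    for A B
  proof -
    obtain B' where B: "B = add_mset g B'" using AB(4) by (metis multi_member_split)
    then have "B' + {#h1, h2#} \<in> prod_one_seqs G"
      using prod_one_seqs_split AB(2) h unfolding g_def by blast
    moreover have "mset (as @ h1 # h2 # bs) = A + (B' + {#h1, h2#})"
      using AB(3) B by (simp add: ac_simps)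
    ultimately show "A = {#}" using atom AB(1) unfolding is_atom_def by auto
  qed
  have "A = {#} \<or> B = {#}"
    if AB: "A \<in> prod_one_seqs G" "B \<in> prod_one_seqs G" "mset (as @ g # bs) = A + B" for A B
  proof -
    have "g \<in># A + B" unfolding AB(3)[symmetric] by simp
    then show ?thesis using left_empty[OF AB] left_empty[OF AB(2,1)] AB(3) by (auto simp: add.commute)
  qed
  then show ?thesis using merged unfolding is_atom_def g_def by auto
qed

lemma lengths_split_property_P:
  assumes P: "property_P G" and h: "h1 \<in> carrier G" "h2 \<in> carrier G"
    and m: "m \<in> lengths G (add_mset (h1 \<otimes> h2) S0)"
  shows "m \<in> lengths G (S0 + {#h1, h2#}) \<or> Suc m \<in> lengths G (S0 + {#h1, h2#})"
proof -
  define g where "g = h1 \<otimes> h2"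
  obtain Ws where Ws: "length Ws = m" "\<forall>W \<in> set Ws. is_atom G W" "sum_list Ws = add_mset g S0"
    using m unfolding lengths_def g_def by blast
  have "g \<in># sum_list Ws" using Ws(3) by simp
  then obtain W where W: "W \<in> set Ws" "g \<in># W" by auto
  then obtain Ws1 Ws2 where Ws_eq: "Ws = Ws1 @ W # Ws2" by (meson split_list)
  obtain W0 where W0: "W = add_mset g W0" using W(2) by (metis multi_member_split)
  have S0: "S0 = sum_list Ws1 + W0 + sum_list Ws2"
    using Ws(3) unfolding Ws_eq W0 by (simp add: add.assoc)
  define V where "V = W0 + {#h1, h2#}"
  have "W - {#g#} + {#h1, h2#} = V" unfolding V_def W0 by simp
  moreover have "is_atom G W" using Ws(2) W(1) by blast
  ultimately have "is_atom G V \<or> (\<exists>U1 U2. is_atom G U1 \<and> is_atom G U2 \<and> V = U1 + U2)"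
    using P W(2) h unfolding property_P_def Let_def g_def by metis
  then show ?thesis
  proof
    assume "is_atom G V"
    then have "length (Ws1 @ V # Ws2) \<in> lengths G (S0 + {#h1, h2#})"
      using Ws(2) unfolding Ws_eq S0 V_def by (intro lengthsI) (auto simp: ac_simps)
    then show ?thesis using Ws(1) Ws_eq by simp
  next
    assume "\<exists>U1 U2. is_atom G U1 \<and> is_atom G U2 \<and> V = U1 + U2"
    then obtain U1 U2 where U: "is_atom G U1" "is_atom G U2" "V = U1 + U2" by blast
    have "sum_list (Ws1 @ U1 # U2 # Ws2) = sum_list Ws1 + V + sum_list Ws2"
      using U(3) by (simp add: add.assoc)
    also have "\<dots> = S0 + {#h1, h2#}" unfolding S0 V_def by (simp add: ac_simps)
    finally have "length (Ws1 @ U1 # U2 # Ws2) \<in> lengths G (S0 + {#h1, h2#})"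
      using Ws(2) U unfolding Ws_eq by (intro lengthsI) auto
    then show ?thesis using Ws(1) Ws_eq by simp
  qed
qed

lemma lengths_merge_within_atom:
  assumes Vs: "\<forall>V \<in> set Vs. is_atom G V" "sum_list Vs = S"
    and V: "mset (as @ h1 # h2 # bs) \<in> set Vs" "set (as @ h1 # h2 # bs) \<subseteq> carrier G"
      "list_prod G (as @ h1 # h2 # bs) = \<one>"
  obtains S0 where "S = S0 + {#h1, h2#}" "length Vs \<in> lengths G (add_mset (h1 \<otimes> h2) S0)"
proof -
  obtain Vs1 Vs2 where Vs_eq: "Vs = Vs1 @ mset (as @ h1 # h2 # bs) # Vs2"
    using V(1) by (meson split_list)
  define S0 where "S0 = sum_list Vs1 + mset as + mset bs + sum_list Vs2"
  let ?Vs' = "Vs1 @ mset (as @ (h1 \<otimes> h2) # bs) # Vs2"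
  have "\<forall>V \<in> set ?Vs'. is_atom G V"
    using Vs(1) is_atom_merge_adjacent[OF _ V(2,3)] unfolding Vs_eq by auto
  moreover have "sum_list ?Vs' = add_mset (h1 \<otimes> h2) S0" unfolding S0_def by (simp add: ac_simps)
  ultimately have "length ?Vs' \<in> lengths G (add_mset (h1 \<otimes> h2) S0)" by (rule lengthsI)
  moreover have "S = S0 + {#h1, h2#}" using Vs(2) unfolding Vs_eq S0_def by (simp add: ac_simps)
  ultimately show ?thesis using that Vs_eq by simp
qed

lemma lengths_merge_across_atoms:
  assumes Us: "\<forall>U \<in> set Us. is_atom G U" "sum_list Us = S0 + {#h1, h2#}"
    and sep: "separated (mset Us) h1 h2"
  obtains n where "n \<in> lengths G (add_mset (h1 \<otimes> h2) S0)" "length Us - 1 \<le> n"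
proof -
  obtain U1 U2 R where UR: "mset Us = {#U1, U2#} + R" "h1 \<in># U1" "h2 \<in># U2"
    using sep unfolding separated_def by blast
  obtain A B where U1: "U1 = add_mset h1 A" and U2: "U2 = add_mset h2 B"
    using UR(2,3) by (metis multi_member_split)
  obtain Rs where Rs: "mset Rs = R" using ex_mset by blast
  have "U1 \<in># mset Us" "U2 \<in># mset Us" "set Rs \<subseteq> set_mset (mset Us)"
    unfolding UR(1) Rs[symmetric] by auto
  then have atoms: "is_atom G U1" "is_atom G U2" "\<forall>U \<in> set Rs. is_atom G U"
    using Us(1) by auto
  have "add_mset (h1 \<otimes> h2) (A + B) \<in> prod_one_seqs G"
    using atoms(1,2) prod_one_seqs_merge unfolding is_atom_def U1 U2 by blast
  then obtain Ws where Ws: "\<forall>W \<in> set Ws. is_atom G W" "sum_list Ws = add_mset (h1 \<otimes> h2) (A + B)"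
    using factorization_exists by blast
  have "S0 + {#h1, h2#} = \<Sum>\<^sub># (mset Us)" using Us(2) by (simp add: sum_mset_sum_list)
  also have "\<dots> = A + B + sum_list Rs + {#h1, h2#}"
    unfolding UR(1) U1 U2 Rs[symmetric] by (simp add: sum_mset_sum_list ac_simps)
  finally have "add_mset (h1 \<otimes> h2) S0 = sum_list (Ws @ Rs)" using Ws(2) by simp
  then have "length (Ws @ Rs) \<in> lengths G (add_mset (h1 \<otimes> h2) S0)"
    using Ws(1) atoms(3) by (intro lengthsI) auto
  moreover have "Ws \<noteq> []" using Ws(2) by auto
  moreover have "length Us = length Rs + 2"
    using arg_cong[OF UR(1), of size] by (simp flip: Rs)
  ultimately show ?thesis using that by (cases Ws) auto
qed

lemma lengths_gap_shrinks_without_one: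
  assumes P: "property_P G" and one: "\<one> \<notin># S"
    and a: "a \<in> lengths G S" and b: "b \<in> lengths G S" and "a + 2 \<le> b"
    and gap: "\<forall>c \<in> lengths G S. \<not> (a < c \<and> c < b)"
  obtains T where "T \<in> prod_one_seqs G" "size T < size S" "Delta (lengths G T) \<noteq> {}"
    "b - a - 1 \<le> Max (Delta (lengths G T))"
proof -
  obtain Vs where Vs: "length Vs = a" "\<forall>V \<in> set Vs. is_atom G V" "sum_list Vs = S"
    using a unfolding lengths_def by blast
  obtain Us where Us: "length Us = b" "\<forall>U \<in> set Us. is_atom G U" "sum_list Us = S"
    using b unfolding lengths_def by blast
  have "\<exists>xs. mset xs = V \<and> 2 \<le> length xs \<and> set xs \<subseteq> carrier G \<and> list_prod G xs = \<one>"
    if V: "V \<in> set Vs" for V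
  proof -
    have "\<one> \<notin># V" using one V Vs(3) by auto
    then obtain xs where "mset xs = V" "2 \<le> length xs" "set xs \<subseteq> carrier G" "list_prod G xs = \<one>"
      using atom_without_one_ordering V Vs(2) by blast
    then show ?thesis by blast
  qed
  moreover have "\<forall>U \<in> set Us. U \<noteq> {#}" using Us(2) by (simp add: is_atom_def)
  ultimately obtain xs as h1 h2 bs where V: "mset xs \<in> set Vs" "set xs \<subseteq> carrier G"
      "list_prod G xs = \<one>" "xs = as @ h1 # h2 # bs" and sep: "separated (mset Us) h1 h2"
    using separated_adjacent_pair_exists[of Vs Us "\<lambda>xs. set xs \<subseteq> carrier G \<and> list_prod G xs = \<one>"]
      Vs(1,3) Us(1,3) \<open>a + 2 \<le> b\<close> by auto
  then obtain S0 where S: "S = S0 + {#h1, h2#}" and a_T: "a \<in> lengths G (add_mset (h1 \<otimes> h2) S0)"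
    using lengths_merge_within_atom[OF Vs(2,3)] Vs(1) by blast
  obtain n where n: "n \<in> lengths G (add_mset (h1 \<otimes> h2) S0)" "b - 1 \<le> n"
    using lengths_merge_across_atoms[OF Us(2) _ sep] Us(1,3) S by blast
  have h: "h1 \<in> carrier G" "h2 \<in> carrier G" using V(2,4) by auto
  have "\<forall>m \<in> lengths G (add_mset (h1 \<otimes> h2) S0). m \<le> a \<or> b - 1 \<le> m"
    using lengths_split_property_P[OF P h] gap S by fastforce
  then have "Delta (lengths G (add_mset (h1 \<otimes> h2) S0)) \<noteq> {}"
      "b - 1 - a \<le> Max (Delta (lengths G (add_mset (h1 \<otimes> h2) S0)))"
    using Delta_gap[OF finite_lengths a_T order_refl n] \<open>a + 2 \<le> b\<close> by auto
  then show ?thesis using that prod_one_seqs_if_in_lengths[OF a_T] S by simp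
qed

lemma lengths_gap_shrinks_with_one:
  assumes one: "\<one> \<in># S"
    and a: "a \<in> lengths G S" and b: "b \<in> lengths G S" and "a < b"
    and gap: "\<forall>c \<in> lengths G S. \<not> (a < c \<and> c < b)"
  obtains T where "T \<in> prod_one_seqs G" "size T < size S" "Delta (lengths G T) \<noteq> {}"
    "b - a \<le> Max (Delta (lengths G T))"
proof -
  obtain T where S: "S = add_mset \<one> T" using one by (metis multi_member_split)
  then obtain a' b' where "a = Suc a'" "b = Suc b'" "a' \<in> lengths G T" "b' \<in> lengths G T"
    using a b lengths_add_mset_one by auto
  moreover have "\<forall>m \<in> lengths G T. m \<le> a' \<or> b' \<le> m"
    using gap calculation(1,2) unfolding S lengths_add_mset_one by force
  ultimately have "Delta (lengths G T) \<noteq> {}" "b - a \<le> Max (Delta (lengths G T))"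
    using Delta_gap[OF finite_lengths, of a' T a' b' b'] \<open>a < b\<close> by auto
  then show ?thesis using that[OF prod_one_seqs_if_in_lengths[OF \<open>a' \<in> lengths G T\<close>]] S by simp
qed

end

theorem lemma5p4:
  fixes G :: "('a, 'b) monoid_scheme"
  assumes "group G"
    and "finite (carrier G)"
    and "card (carrier G) \<ge> 3"
    and "property_P G"
    and "S \<in> prod_one_seqs G"
    and "Delta (lengths G S) \<noteq> {}"
    and "Max (Delta (lengths G S)) \<ge> 2"
  shows "\<exists>T \<in> prod_one_seqs G. size T < size S \<and> Delta (lengths G T) \<noteq> {} \<and>
           Max (Delta (lengths G T)) \<ge> Max (Delta (lengths G S)) - 1"
proof -
  interpret group G by (rule assms(1))
  have "Max (Delta (lengths G S)) \<in> Delta (lengths G S)"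
    using Max_in[OF finite_Delta[OF finite_lengths]] assms(6) .
  then obtain a b where ab: "a \<in> lengths G S" "b \<in> lengths G S" "a < b"
      "\<forall>c \<in> lengths G S. \<not> (a < c \<and> c < b)" and max: "Max (Delta (lengths G S)) = b - a"
    unfolding Delta_def by blast
  show ?thesis
  proof (cases "\<one>\<^bsub>G\<^esub> \<in># S")
    case True
    then show ?thesis using lengths_gap_shrinks_with_one[OF True ab] max by (metis diff_le_self le_trans)
  next
    case False
    have "a + 2 \<le> b" using assms(7) max by simp
    then show ?thesis using lengths_gap_shrinks_without_one[OF assms(4) False ab(1,2) _ ab(4)] max by metis
  qed
qed

end
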